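(* Let $d\ge1$ and let $V,W:\mathbb{R}^d\to\mathbb{R}$ satisfy the hypotheses (H) stated in the context. There exist constants $C_W,C_\Pi>0$, independent of $\sigma$, such that for all $\mu\in\mathcal{P}(\mathbb{R}^d;P)$, the measure $\Pi(\mu)(\cdot+c_\mu)$ belongs to $K^0_{C_W,C_\Pi}$, where $c_\mu\in\mathbb{R}^d$ is defined by $(\nabla V+\nabla W*\mu)(c_\mu)=0$.
   Context: Hypotheses (H): (i) $V,W\in\mathcal{C}^2(\mathbb{R}^d)$, $V\ge0$, $W\ge0$. (ii) There is a polynomial $P$ with $P(|x|)\ge1$ such that for all $x$, $|W(x)|+|\nabla W(x)|+\|\nabla^2W(x)\|+|V(x)|+|\nabla V(x)|+\|\nabla^2V(x)\|\le P(|x|)$; moreover $\nabla^2V\ge\rho>0$ and $\nabla^2W\ge\alpha>0$ everywhere, $\Delta V(x)\le aV(x)$ for some constant $a$, and $|\nabla V(x)|^2/V(x)\to\infty$ as $|x|\to\infty$. (iii) $V$ has a unique minimum at a point $m$. (iv) $W(x)=G(|x|)$ for some $G:\mathbb{R}_+\to\mathbb{R}$. Notation: $\mathcal{P}(\mathbb{R}^d;P)$ is the set of Borel probability measures $\mu$ on $\mathbb{R}^d$ with $\int P(|y|)\,\mu(\mathrm{d}y)<\infty$. For $\sigma>0$ (the noise parameter, considered small, $\sigma^2\ll1$), $\Pi(\mu)$ is the probability measure with density $Z(\mu,\sigma)^{-1}e^{-2(V+W*\mu)(x)/\sigma^2}$, where $Z(\mu,\sigma)=\int e^{-2(V+W*\mu)(x)/\sigma^2}\,\mathrm{d}x$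 and $W*\mu(x)=\int W(x-y)\mu(\mathrm{d}y)$. For $\alpha,C>0$, $K^0_{\alpha,C}$ is the set of probability measures $\nu$ on $\mathbb{R}^d$ such that $\nu(\{y:|y|>R\})<Ce^{-\alpha R}$ for all $R>0$. *)

theory Defs
  imports "HOL-Analysis.Analysis" "HOL-Probability.Probability"
          "HOL-Computational_Algebra.Polynomial"
begin

definition grad :: "('a::euclidean_space \<Rightarrow> real) \<Rightarrow> 'a \<Rightarrow> 'a" where
  "grad f x = (\<Sum>b\<in>Basis. frechet_derivative f (at x) b *\<^sub>R b)"

definition hess :: "('a::euclidean_space \<Rightarrow> real) \<Rightarrow> 'a \<Rightarrow> 'a \<Rightarrow> 'a" where
  "hess f x = frechet_derivative (grad f) (at x)"

definition laplacian :: "('a::euclidean_space \<Rightarrow> real) \<Rightarrow> 'a \<Rightarrow> real" where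
  "laplacian f x = (\<Sum>b\<in>Basis. hess f x b \<bullet> b)"

definition C2 :: "('a::euclidean_space \<Rightarrow> real) \<Rightarrow> bool" where
  "C2 f \<longleftrightarrow> (\<forall>x. f differentiable (at x)) \<and> (\<forall>x. grad f differentiable (at x))
     \<and> (\<forall>u v. continuous_on UNIV (\<lambda>x. hess f x u \<bullet> v))"

definition conv :: "('a::euclidean_space \<Rightarrow> real) \<Rightarrow> 'a measure \<Rightarrow> 'a \<Rightarrow> real" where
  "conv W \<mu> x = (\<integral>y. W (x - y) \<partial>\<mu>)"

definition grad_conv :: "('a::euclidean_space \<Rightarrow> real) \<Rightarrow> 'a measure \<Rightarrow> 'a \<Rightarrow> 'a" where
  "grad_conv W \<mu> x = (\<integral>y. grad W (x - y) \<partial>\<mu>)"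

definition gibbs_weight ::
  "('a::euclidean_space \<Rightarrow> real) \<Rightarrow> ('a \<Rightarrow> real) \<Rightarrow> real \<Rightarrow> 'a measure \<Rightarrow> 'a \<Rightarrow> real" where
  "gibbs_weight V W \<sigma> \<mu> x = exp (- 2 * (V x + conv W \<mu> x) / \<sigma>\<^sup>2)"

definition Zpart ::
  "('a::euclidean_space \<Rightarrow> real) \<Rightarrow> ('a \<Rightarrow> real) \<Rightarrow> real \<Rightarrow> 'a measure \<Rightarrow> real" where
  "Zpart V W \<sigma> \<mu> = (\<integral>x. gibbs_weight V W \<sigma> \<mu> x \<partial>lborel)"

definition PiM ::
  "('a::euclidean_space \<Rightarrow> real) \<Rightarrow> ('a \<Rightarrow> real) \<Rightarrow> real \<Rightarrow> 'a measure \<Rightarrow> 'a measure" where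
  "PiM V W \<sigma> \<mu> = density lborel (\<lambda>x. ennreal (gibbs_weight V W \<sigma> \<mu> x / Zpart V W \<sigma> \<mu>))"

text \<open>The translated measure \<open>\<nu>(\<cdot>) = \<Pi>(\<mu>)(\<cdot> + c)\<close>: \<open>\<nu>(A) = \<Pi>(\<mu>)(A + c)\<close>.\<close>
definition shift_measure :: "'a::euclidean_space measure \<Rightarrow> 'a \<Rightarrow> 'a measure" where
  "shift_measure M c = distr M borel (\<lambda>x. x - c)"

definition PP :: "real poly \<Rightarrow> 'a::euclidean_space measure set" where
  "PP P = {\<mu>. prob_space \<mu> \<and> sets \<mu> = sets borel \<and> integrable \<mu> (\<lambda>y. poly P (norm y))}"

definition K0 :: "real \<Rightarrow> real \<Rightarrow> 'a::euclidean_space measure set" where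
  "K0 \<alpha> C = {\<nu>. prob_space \<nu> \<and> sets \<nu> = sets borel \<and>
      (\<forall>R>0. measure \<nu> {y. norm y > R} < C * exp (- \<alpha> * R))}"

end

(*
  Write U = 2 (V + W * mu) / sigma^2, so that Pi(mu) has density exp (- U) / Z.  Integrating the
  pointwise convexity inequalities of W against mu shows that W * mu is convex without
  differentiating under the integral; since grad U (c_mu) = 0, U grows along every ray from c_mu at
  least like kappa/2 |z|^2 with kappa = 2 (rho + alpha) / sigma^2.  This makes exp (- U) integrable
  and, for kappa >= 1, gives exp (- U (c + 2 z)) <= exp (- 3 |z|^2 / 2) exp (- U (c + z)).  The
  substitution x = c + 2 z then bounds the Pi(mu)-mass of {|x - c| > R} by 2^d exp (- 3 R^2 / 8)
  times the total mass 1, uniformly in mu and sigma and without any estimate of Z.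
*)
theory Submission
  imports Defs
begin

lemma increment_ge_of_second_deriv_ge:
  fixes f f' f'' :: "real \<Rightarrow> real"
  assumes f': "\<And>t. (f has_real_derivative f' t) (at t)"
    and f'': "\<And>t. (f' has_real_derivative f'' t) (at t)"
    and k: "\<And>t. k \<le> f'' t"
    and "0 \<le> s" "s \<le> t"
  shows "f' 0 * (t - s) + k / 2 * (t\<^sup>2 - s\<^sup>2) \<le> f t - f s"
proof -
  define q where "q t = f t - f' 0 * t - k / 2 * t\<^sup>2" for t
  have q_deriv: "(q has_real_derivative f' t - f' 0 - k * t) (at t)" for t
    unfolding q_def by (auto intro!: derivative_eq_intros f')
  have f'_increment: "f' 0 + k * t \<le> f' t" if "0 \<le> t" for t
  proof -
    have "f' 0 - k * 0 \<le> f' t - k * t"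
      by (rule DERIV_nonneg_imp_nondecreasing[OF that])
         (auto intro!: derivative_eq_intros f'' simp: k)
    then show ?thesis by simp
  qed
  have "q s \<le> q t"
  proof (rule DERIV_nonneg_imp_nondecreasing[OF \<open>s \<le> t\<close>])
    fix x assume "s \<le> x"
    then have "0 \<le> f' x - f' 0 - k * x" using f'_increment[of x] \<open>0 \<le> s\<close> by simp
    then show "\<exists>y. (q has_real_derivative y) (at x) \<and> 0 \<le> y" using q_deriv by blast
  qed
  then show ?thesis by (simp add: q_def algebra_simps)
qed

lemma has_derivative_grad:
  fixes f :: "'a::euclidean_space \<Rightarrow> real"
  assumes "f differentiable (at x)"
  shows "(f has_derivative (\<lambda>h. grad f x \<bullet> h)) (at x)"
proof -
  let ?D = "frechet_derivative f (at x)"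
  have D: "(f has_derivative ?D) (at x)" using assms frechet_derivative_works by blast
  then have lin: "linear ?D" using has_derivative_linear by blast
  have "?D h = grad f x \<bullet> h" for h
  proof -
    have "?D h = ?D (\<Sum>b\<in>Basis. (h \<bullet> b) *\<^sub>R b)" by (simp add: euclidean_representation)
    also have "\<dots> = (\<Sum>b\<in>Basis. (h \<bullet> b) * ?D b)"
      by (simp add: linear_sum[OF lin] linear_scale[OF lin])
    also have "\<dots> = grad f x \<bullet> h"
      by (auto simp: grad_def inner_sum_right inner_commute intro!: sum.cong)
    finally show ?thesis .
  qed
  with D show ?thesis by (metis (no_types, lifting) ext)
qed

lemma
  fixes f :: "'a::euclidean_space \<Rightarrow> real"
  assumes f: "\<forall>x. f differentiable (at x)" and grad_f: "\<forall>x. grad f differentiable (at x)"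
  shows has_real_derivative_along_line:
      "((\<lambda>t. f (x + t *\<^sub>R z)) has_real_derivative grad f (x + t *\<^sub>R z) \<bullet> z) (at t)"
    and has_real_derivative_grad_along_line:
      "((\<lambda>t. grad f (x + t *\<^sub>R z) \<bullet> z) has_real_derivative hess f (x + t *\<^sub>R z) z \<bullet> z) (at t)"
proof -
  let ?y = "x + t *\<^sub>R z"
  have line: "((\<lambda>t. x + t *\<^sub>R z) has_derivative (\<lambda>s. s *\<^sub>R z)) (at t)"
    by (auto intro!: derivative_eq_intros)
  have "((\<lambda>t. f (x + t *\<^sub>R z)) has_derivative (\<lambda>s. grad f ?y \<bullet> (s *\<^sub>R z))) (at t)"
    using has_derivative_compose[OF line has_derivative_grad[OF f[rule_format]]] .
  then show "((\<lambda>t. f (x + t *\<^sub>R z)) has_real_derivative grad f ?y \<bullet> z) (at t)"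
    unfolding has_field_derivative_def by (rule has_derivative_eq_rhs) (auto simp: mult.commute)
  have hess: "(grad f has_derivative hess f ?y) (at ?y)"
    unfolding hess_def using grad_f frechet_derivative_works by blast
  then have lin: "linear (hess f ?y)" using has_derivative_linear by blast
  have "((\<lambda>t. grad f (x + t *\<^sub>R z) \<bullet> z) has_derivative (\<lambda>s. hess f ?y (s *\<^sub>R z) \<bullet> z)) (at t)"
    using has_derivative_compose[OF line hess] by (auto intro!: derivative_eq_intros)
  then show "((\<lambda>t. grad f (x + t *\<^sub>R z) \<bullet> z) has_real_derivative hess f ?y z \<bullet> z) (at t)"
    unfolding has_field_derivative_def
    by (rule has_derivative_eq_rhs) (auto simp: linear_scale[OF lin] mult.commute)
qed

lemma strongly_convex_increment:
  fixes f :: "'a::euclidean_space \<Rightarrow> real"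
  assumes "\<forall>x. f differentiable (at x)" and "\<forall>x. grad f differentiable (at x)"
    and hess_ge: "\<forall>x v. k * (norm v)\<^sup>2 \<le> hess f x v \<bullet> v"
    and "0 \<le> s" "s \<le> t"
  shows "(grad f x \<bullet> z) * (t - s) + k / 2 * (t\<^sup>2 - s\<^sup>2) * (norm z)\<^sup>2
           \<le> f (x + t *\<^sub>R z) - f (x + s *\<^sub>R z)"
  using increment_ge_of_second_deriv_ge[where k = "k * (norm z)\<^sup>2",
      OF has_real_derivative_along_line[OF assms(1,2), where x = x and z = z]
         has_real_derivative_grad_along_line[OF assms(1,2), where x = x and z = z]
         hess_ge[rule_format] assms(4,5)]
  by (simp add: field_simps)

lemma bounded_linear_hess:
  assumes "grad f differentiable (at x)"
  shows "bounded_linear (hess f x)"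
  using assms frechet_derivative_works has_derivative_bounded_linear unfolding hess_def by blast

lemma abs_poly_le_sum_coeffs:
  fixes P :: "real poly"
  assumes "0 \<le> t"
  shows "\<bar>poly P t\<bar> \<le> (\<Sum>i\<le>degree P. \<bar>coeff P i\<bar>) * (1 + t ^ degree P)"
proof -
  have "\<bar>poly P t\<bar> \<le> (\<Sum>i\<le>degree P. \<bar>coeff P i * t ^ i\<bar>)"
    unfolding poly_altdef by (rule sum_abs)
  also have "\<dots> \<le> (\<Sum>i\<le>degree P. \<bar>coeff P i\<bar> * (1 + t ^ degree P))"
  proof (rule sum_mono)
    fix i assume "i \<in> {..degree P}"
    have "t ^ i \<le> 1 + t ^ degree P"
    proof (cases "t \<le> 1")
      case True
      then show ?thesis using assms by (simp add: power_le_one add_increasing2)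
    next
      case False
      then show ?thesis using \<open>i \<in> {..degree P}\<close> by (simp add: add_increasing power_increasing)
    qed
    then show "\<bar>coeff P i * t ^ i\<bar> \<le> \<bar>coeff P i\<bar> * (1 + t ^ degree P)"
      using assms by (simp add: abs_mult mult_left_mono)
  qed
  also have "\<dots> = (\<Sum>i\<le>degree P. \<bar>coeff P i\<bar>) * (1 + t ^ degree P)"
    by (simp add: sum_distrib_right)
  finally show ?thesis .
qed

lemma power_degree_le_poly:
  fixes P :: "real poly"
  assumes P_ge_1: "\<And>r. 0 \<le> r \<Longrightarrow> 1 \<le> poly P r"
  obtains B where "\<And>r. 0 \<le> r \<Longrightarrow> r ^ degree P \<le> B * poly P r"
proof (cases "degree P = 0")
  case True
  then show ?thesis using P_ge_1 that[of 1] by auto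
next
  case False
  let ?n = "degree P" and ?lc = "lead_coeff P"
  have lim: "((\<lambda>x. poly P x / x ^ ?n) \<longlongrightarrow> ?lc) at_top"
    using poly_divide_tendsto_aux[of P] filterlim_mono at_top_le_at_infinity by blast
  have "eventually (\<lambda>x. 0 \<le> poly P x / x ^ ?n) at_top"
    using eventually_ge_at_top[of "0::real"] by eventually_elim (use P_ge_1 in force)
  then have "0 \<le> ?lc" using tendsto_lowerbound[OF lim] by simp
  moreover have "P \<noteq> 0" using P_ge_1[of 0] by auto
  ultimately have lc: "0 < ?lc" by (simp add: order_less_le)
  have "eventually (\<lambda>x. ?lc / 2 < poly P x / x ^ ?n) at_top"
    using order_tendstoD(1)[OF lim, of "?lc / 2"] lc by simp
  then obtain R where R: "\<And>x. max R 1 \<le> x \<Longrightarrow> ?lc / 2 < poly P x / x ^ ?n"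
    by (auto simp: eventually_at_top_linorder)
  show ?thesis
  proof (rule that[of "2 / ?lc + max R 1 ^ ?n"])
    fix r :: real assume r: "0 \<le> r"
    have P_r: "1 \<le> poly P r" using P_ge_1 r by simp
    consider "max R 1 \<le> r" | "r \<le> max R 1" by linarith
    then have "r ^ ?n \<le> 2 / ?lc * poly P r + max R 1 ^ ?n * poly P r"
    proof cases
      case 1
      then have "?lc / 2 * r ^ ?n < poly P r" using R[OF 1] by (simp add: field_simps)
      then have "r ^ ?n \<le> 2 / ?lc * poly P r" using lc by (simp add: field_simps)
      then show ?thesis using P_r by (simp add: add_increasing2)
    next
      case 2
      then have "r ^ ?n \<le> max R 1 ^ ?n" using r by (intro power_mono)
      also have "\<dots> \<le> max R 1 ^ ?n * poly P r" using P_r by (simp add: mult_le_cancel_left1)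
      finally have "r ^ ?n \<le> max R 1 ^ ?n * poly P r" .
      then show ?thesis using P_r lc by (simp add: add_increasing)
    qed
    then show "r ^ ?n \<le> (2 / ?lc + max R 1 ^ ?n) * poly P r" by (simp add: distrib_right)
  qed
qed

lemma abs_poly_le_poly_shift:
  fixes P :: "real poly"
  assumes P_ge_1: "\<And>r. 0 \<le> r \<Longrightarrow> 1 \<le> poly P r" and "0 \<le> a"
  obtains K where "\<And>r t. 0 \<le> r \<Longrightarrow> 0 \<le> t \<Longrightarrow> t \<le> r + a \<Longrightarrow> \<bar>poly P t\<bar> \<le> K * poly P r"
proof -
  let ?n = "degree P"
  define A where "A = (\<Sum>i\<le>degree P. \<bar>coeff P i\<bar>)"
  have "0 \<le> A" by (simp add: A_def sum_nonneg)
  obtain B where B: "\<And>r. 0 \<le> r \<Longrightarrow> r ^ ?n \<le> B * poly P r"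
    using power_degree_le_poly[OF P_ge_1] by blast
  show ?thesis
  proof (rule that[of "A * (1 + 2 ^ ?n * a ^ ?n) + A * 2 ^ ?n * B"])
    fix r t :: real assume r: "0 \<le> r" and t: "0 \<le> t" "t \<le> r + a"
    have P_r: "1 \<le> poly P r" using P_ge_1 r by simp
    have "t ^ ?n \<le> (2 * max r a) ^ ?n" using t r by (intro power_mono) auto
    also have "\<dots> \<le> 2 ^ ?n * (r ^ ?n + a ^ ?n)"
      using r \<open>0 \<le> a\<close> by (auto simp: power_mult_distrib max_def)
    finally have "t ^ ?n \<le> 2 ^ ?n * (r ^ ?n + a ^ ?n)" .
    then have "1 + t ^ ?n \<le> (1 + 2 ^ ?n * a ^ ?n) + 2 ^ ?n * r ^ ?n"
      by (simp add: algebra_simps)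
    then have "\<bar>poly P t\<bar> \<le> A * ((1 + 2 ^ ?n * a ^ ?n) + 2 ^ ?n * r ^ ?n)"
      using abs_poly_le_sum_coeffs[OF t(1), of P] \<open>0 \<le> A\<close> unfolding A_def[symmetric]
      by (meson mult_left_mono order.trans)
    also have "\<dots> \<le> A * ((1 + 2 ^ ?n * a ^ ?n) * poly P r + 2 ^ ?n * (B * poly P r))"
    proof -
      have "0 \<le> 2 ^ ?n * a ^ ?n" using \<open>0 \<le> a\<close> by simp
      then have "1 + 2 ^ ?n * a ^ ?n \<le> (1 + 2 ^ ?n * a ^ ?n) * poly P r"
        using P_r by (simp add: mult_le_cancel_left1)
      then show ?thesis
        using \<open>0 \<le> A\<close> B[OF r] by (intro mult_left_mono add_mono) simp_all
    qed
    also have "\<dots> = (A * (1 + 2 ^ ?n * a ^ ?n) + A * 2 ^ ?n * B) * poly P r"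
      by (simp add: algebra_simps)
    finally show "\<bar>poly P t\<bar> \<le> (A * (1 + 2 ^ ?n * a ^ ?n) + A * 2 ^ ?n * B) * poly P r" .
  qed
qed

lemma poly_ge_1_nonneg:
  assumes "\<forall>x::'a::euclidean_space. 1 \<le> poly P (norm x)" and "0 \<le> r"
  shows "1 \<le> poly P r"
proof -
  obtain b :: 'a where "b \<in> Basis" using nonempty_Basis by blast
  then have "norm (r *\<^sub>R b) = r" using \<open>0 \<le> r\<close> by simp
  then show ?thesis using assms(1) by metis
qed

lemma PP_integrable_diff:
  fixes g :: "'a::euclidean_space \<Rightarrow> 'b::{banach, second_countable_topology}"
  assumes \<mu>: "\<mu> \<in> PP P" and P_ge_1: "\<forall>x::'a. 1 \<le> poly P (norm x)"
    and "continuous_on UNIV g" and g_le: "\<forall>x. norm (g x) \<le> poly P (norm x)"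
  shows "integrable \<mu> (\<lambda>y. g (x - y))"
proof -
  have sets: "sets \<mu> = sets borel" and int: "integrable \<mu> (\<lambda>y. poly P (norm y))"
    using \<mu> by (auto simp: PP_def)
  obtain K where K: "\<And>r t. 0 \<le> r \<Longrightarrow> 0 \<le> t \<Longrightarrow> t \<le> r + norm x \<Longrightarrow> \<bar>poly P t\<bar> \<le> K * poly P r"
    using abs_poly_le_poly_shift[of P "norm x"] poly_ge_1_nonneg[OF P_ge_1] by auto
  have "(\<lambda>y. g (x - y)) \<in> borel_measurable borel"
    by (intro borel_measurable_continuous_on[OF \<open>continuous_on UNIV g\<close>]) measurable
  then have meas: "(\<lambda>y. g (x - y)) \<in> borel_measurable \<mu>"
    by (subst measurable_cong_sets[OF sets refl])
  show ?thesis
  proof (rule Bochner_Integration.integrable_bound[OF integrable_mult_right[OF int, of K] meas],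
      rule AE_I2)
    fix y
    have "norm (g (x - y)) \<le> \<bar>poly P (norm (x - y))\<bar>"
      using g_le[rule_format, of "x - y"] by linarith
    also have "\<dots> \<le> K * poly P (norm y)"
      using K[of "norm y" "norm (x - y)"] norm_triangle_ineq4[of x y] by (simp add: add.commute)
    finally show "norm (g (x - y)) \<le> norm (K * poly P (norm y))" by simp
  qed
qed

lemma borel_measurable_conv:
  fixes W :: "'a::euclidean_space \<Rightarrow> real"
  assumes "sigma_finite_measure \<mu>" and "sets \<mu> = sets borel" and "continuous_on UNIV W"
  shows "conv W \<mu> \<in> borel_measurable borel"
proof -
  have [measurable]: "W \<in> borel_measurable borel"
    using \<open>continuous_on UNIV W\<close> by (rule borel_measurable_continuous_onI)
  have "(\<lambda>(x, y). W (x - y)) \<in> borel_measurable (borel \<Otimes>\<^sub>M (borel::'a measure))"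
    by measurable
  then have "(\<lambda>(x, y). W (x - y)) \<in> borel_measurable (borel \<Otimes>\<^sub>M \<mu>)"
    by (subst measurable_cong_sets[OF sets_pair_measure_cong[OF refl assms(2)] refl])
  then show ?thesis
    unfolding conv_def[abs_def]
    by (rule sigma_finite_measure.borel_measurable_lebesgue_integral[OF assms(1)])
qed

lemma conv_strongly_convex_increment:
  fixes W :: "'a::euclidean_space \<Rightarrow> real"
  assumes \<mu>: "\<mu> \<in> PP P" and P_ge_1: "\<forall>x::'a. 1 \<le> poly P (norm x)"
    and W: "\<forall>x. W differentiable (at x)" and grad_W: "\<forall>x. grad W differentiable (at x)"
    and hess_ge: "\<forall>x v. k * (norm v)\<^sup>2 \<le> hess W x v \<bullet> v"
    and W_le: "\<forall>x. \<bar>W x\<bar> \<le> poly P (norm x)"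
    and grad_W_le: "\<forall>x. norm (grad W x) \<le> poly P (norm x)"
    and "0 \<le> s" "s \<le> t"
  shows "(grad_conv W \<mu> x \<bullet> z) * (t - s) + k / 2 * (t\<^sup>2 - s\<^sup>2) * (norm z)\<^sup>2
           \<le> conv W \<mu> (x + t *\<^sub>R z) - conv W \<mu> (x + s *\<^sub>R z)"
proof -
  interpret prob_space \<mu> using \<mu> by (simp add: PP_def)
  define c where "c = k / 2 * (t\<^sup>2 - s\<^sup>2) * (norm z)\<^sup>2"
  have "continuous_on UNIV W" "continuous_on UNIV (grad W)"
    using W grad_W
    by (auto intro!: differentiable_imp_continuous_on differentiable_at_imp_differentiable_on)
  then have int_W: "integrable \<mu> (\<lambda>y. W (u - y))"
    and int_grad_W: "integrable \<mu> (\<lambda>y. grad W (u - y))" for u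
    using PP_integrable_diff[OF \<mu> P_ge_1] W_le grad_W_le by (metis real_norm_def)+
  have "(grad_conv W \<mu> x \<bullet> z) * (t - s) + c = (\<integral>y. (grad W (x - y) \<bullet> z) * (t - s) + c \<partial>\<mu>)"
    using int_grad_W[of x] by (simp add: grad_conv_def prob_space)
  also have "\<dots> \<le> (\<integral>y. W (x + t *\<^sub>R z - y) - W (x + s *\<^sub>R z - y) \<partial>\<mu>)"
  proof (rule integral_mono)
    fix y
    show "(grad W (x - y) \<bullet> z) * (t - s) + c \<le> W (x + t *\<^sub>R z - y) - W (x + s *\<^sub>R z - y)"
      using strongly_convex_increment[OF W grad_W hess_ge \<open>0 \<le> s\<close> \<open>s \<le> t\<close>, of "x - y" z]
      by (simp add: c_def algebra_simps)
  qed (use int_W int_grad_W in auto)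
  also have "\<dots> = conv W \<mu> (x + t *\<^sub>R z) - conv W \<mu> (x + s *\<^sub>R z)"
    unfolding conv_def by (rule Bochner_Integration.integral_diff[OF int_W int_W])
  finally show ?thesis by (simp add: c_def)
qed

(* For kappa-strongly convex U with grad U c = 0 this follows from strongly_convex_increment. *)
definition quadratic_growth :: "('a::real_normed_vector \<Rightarrow> real) \<Rightarrow> 'a \<Rightarrow> real \<Rightarrow> bool" where
  "quadratic_growth U c \<kappa> \<longleftrightarrow> (\<forall>z s t. 0 \<le> s \<longrightarrow> s \<le> t \<longrightarrow>
     \<kappa> / 2 * (t\<^sup>2 - s\<^sup>2) * (norm z)\<^sup>2 \<le> U (c + t *\<^sub>R z) - U (c + s *\<^sub>R z))"

lemma quadratic_growth_mean_field_potential: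
  fixes V W :: "'a::euclidean_space \<Rightarrow> real"
  assumes V: "\<forall>x. V differentiable (at x)" and grad_V: "\<forall>x. grad V differentiable (at x)"
    and hess_V: "\<forall>x v. \<rho> * (norm v)\<^sup>2 \<le> hess V x v \<bullet> v"
    and W: "\<forall>x. W differentiable (at x)" and grad_W: "\<forall>x. grad W differentiable (at x)"
    and hess_W: "\<forall>x v. \<alpha> * (norm v)\<^sup>2 \<le> hess W x v \<bullet> v"
    and \<mu>: "\<mu> \<in> PP P" and P_ge_1: "\<forall>x::'a. 1 \<le> poly P (norm x)"
    and W_le: "\<forall>x. \<bar>W x\<bar> \<le> poly P (norm x)"
    and grad_W_le: "\<forall>x. norm (grad W x) \<le> poly P (norm x)"
    and critical: "grad V c + grad_conv W \<mu> c = 0" and "0 \<le> \<beta>"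
  shows "quadratic_growth (\<lambda>x. \<beta> * (V x + conv W \<mu> x)) c (\<beta> * (\<rho> + \<alpha>))"
  unfolding quadratic_growth_def
proof (intro allI impI)
  fix z :: 'a and s t :: real
  assume "0 \<le> s" "s \<le> t"
  have "(grad V c \<bullet> z) * (t - s) + (grad_conv W \<mu> c \<bullet> z) * (t - s) = 0"
    using critical by (simp flip: inner_add_left distrib_right)
  then have "(\<rho> + \<alpha>) / 2 * (t\<^sup>2 - s\<^sup>2) * (norm z)\<^sup>2
      \<le> V (c + t *\<^sub>R z) + conv W \<mu> (c + t *\<^sub>R z) - (V (c + s *\<^sub>R z) + conv W \<mu> (c + s *\<^sub>R z))"
    using strongly_convex_increment[OF V grad_V hess_V \<open>0 \<le> s\<close> \<open>s \<le> t\<close>, of c z]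
        conv_strongly_convex_increment[OF \<mu> P_ge_1 W grad_W hess_W W_le grad_W_le
        \<open>0 \<le> s\<close> \<open>s \<le> t\<close>, of c z]
    by (simp add: algebra_simps add_divide_distrib)
  then have "\<beta> * ((\<rho> + \<alpha>) / 2 * (t\<^sup>2 - s\<^sup>2) * (norm z)\<^sup>2)
      \<le> \<beta> * (V (c + t *\<^sub>R z) + conv W \<mu> (c + t *\<^sub>R z)
              - (V (c + s *\<^sub>R z) + conv W \<mu> (c + s *\<^sub>R z)))"
    using \<open>0 \<le> \<beta>\<close> by (rule mult_left_mono)
  then show "\<beta> * (\<rho> + \<alpha>) / 2 * (t\<^sup>2 - s\<^sup>2) * (norm z)\<^sup>2
      \<le> \<beta> * (V (c + t *\<^sub>R z) + conv W \<mu> (c + t *\<^sub>R z))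
         - \<beta> * (V (c + s *\<^sub>R z) + conv W \<mu> (c + s *\<^sub>R z))"
    by (simp add: field_simps)
qed

lemma quadratic_growth_exp_le:
  assumes "quadratic_growth U c \<kappa>" and "0 \<le> s" "s \<le> t"
  shows "exp (- U (c + t *\<^sub>R z))
           \<le> exp (- \<kappa> / 2 * (t\<^sup>2 - s\<^sup>2) * (norm z)\<^sup>2) * exp (- U (c + s *\<^sub>R z))"
proof -
  have "\<kappa> / 2 * (t\<^sup>2 - s\<^sup>2) * (norm z)\<^sup>2 \<le> U (c + t *\<^sub>R z) - U (c + s *\<^sub>R z)"
    using assms unfolding quadratic_growth_def by blast
  then show ?thesis by (simp flip: exp_add)
qed

lemma integrable_exp_neg_sq:
  assumes "0 < a"
  shows "integrable lborel (\<lambda>t::real. exp (- a * t\<^sup>2))"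
proof -
  have "integrable lborel (\<lambda>t. std_normal_density (0 + sqrt (2 * a) * t))"
    using assms by (intro lborel_integrable_real_affine) auto
  then have "integrable lborel (\<lambda>t. sqrt (2 * pi) * std_normal_density (0 + sqrt (2 * a) * t))"
    by simp
  moreover have
    "(\<lambda>t. sqrt (2 * pi) * std_normal_density (0 + sqrt (2 * a) * t)) = (\<lambda>t. exp (- a * t\<^sup>2))"
    using assms by (simp add: std_normal_density_def power_mult_distrib)
  ultimately show ?thesis by (simp only:)
qed

lemma integrable_exp_neg_sq_norm:
  assumes "0 < a"
  shows "integrable lborel (\<lambda>x::'a::euclidean_space. exp (- a * (norm x)\<^sup>2))"
proof (rule integrableI_nonneg)
  have exp_prod: "exp (- a * (norm x)\<^sup>2) = (\<Prod>b\<in>Basis. exp (- a * (x \<bullet> b)\<^sup>2))" for x :: 'a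
  proof -
    have "(norm x)\<^sup>2 = (\<Sum>b\<in>Basis. (x \<bullet> b)\<^sup>2)"
      unfolding power2_norm_eq_inner by (subst euclidean_inner) (simp add: power2_eq_square)
    then show ?thesis by (simp add: exp_sum[symmetric] sum_distrib_left)
  qed
  have "(\<integral>\<^sup>+(x::'a). ennreal (exp (- a * (norm x)\<^sup>2)) \<partial>lborel)
      = (\<integral>\<^sup>+(x::'a). (\<Prod>b\<in>Basis. ennreal (exp (- a * (x \<bullet> b)\<^sup>2))) \<partial>lborel)"
    unfolding exp_prod by (simp add: prod_ennreal)
  also have "\<dots> = (\<Prod>b\<in>(Basis::'a set). \<integral>\<^sup>+t. ennreal (exp (- a * t\<^sup>2)) \<partial>lborel)"
    by (rule nn_integral_lborel_prod) auto
  also have "\<dots> < \<infinity>"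
    using integrable_exp_neg_sq[OF assms]
    by (simp add: less_top[symmetric] ennreal_prod_eq_top integrable_iff_bounded power_eq_top_ennreal)
  finally show "(\<integral>\<^sup>+(x::'a). ennreal (exp (- a * (norm x)\<^sup>2)) \<partial>lborel) < \<infinity>" .
qed auto

lemma nn_integral_lborel_affine:
  fixes f :: "'a::euclidean_space \<Rightarrow> ennreal"
  assumes [measurable]: "f \<in> borel_measurable borel" and "c \<noteq> 0"
  shows "(\<integral>\<^sup>+x. f x \<partial>lborel)
           = ennreal (\<bar>c\<bar> ^ DIM('a)) * (\<integral>\<^sup>+x. f (t + c *\<^sub>R x) \<partial>lborel)"
  by (subst lborel_affine[OF \<open>c \<noteq> 0\<close>, of t])
     (simp add: nn_integral_density nn_integral_distr nn_integral_cmult)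

lemma nn_integral_tail_le_doubling:
  fixes f :: "'a::euclidean_space \<Rightarrow> ennreal"
  assumes [measurable]: "f \<in> borel_measurable borel"
    and doubling: "\<And>z. R < 2 * norm z \<Longrightarrow> f (c + 2 *\<^sub>R z) \<le> q * f (c + z)"
  shows "(\<integral>\<^sup>+x. f x * indicator {x. R < norm (x - c)} x \<partial>lborel)
           \<le> 2 ^ DIM('a) * q * (\<integral>\<^sup>+x. f x \<partial>lborel)"
proof -
  have "(\<integral>\<^sup>+x. f x * indicator {x. R < norm (x - c)} x \<partial>lborel)
      = 2 ^ DIM('a) * (\<integral>\<^sup>+z. f (c + 2 *\<^sub>R z) * indicator {z. R < 2 * norm z} z \<partial>lborel)"
    by (subst nn_integral_lborel_affine[of _ 2 c])
       (auto simp: indicator_def simp flip: ennreal_power)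
  also have "\<dots> \<le> 2 ^ DIM('a) * (\<integral>\<^sup>+z. q * f (c + z) \<partial>lborel)"
    using doubling by (intro mult_left_mono nn_integral_mono) (auto simp: indicator_def)
  also have "\<dots> = 2 ^ DIM('a) * q * (\<integral>\<^sup>+x. f x \<partial>lborel)"
    using nn_integral_lborel_affine[of f 1 c] by (simp add: nn_integral_cmult mult.assoc)
  finally show ?thesis .
qed

definition gibbs_measure :: "('a::euclidean_space \<Rightarrow> real) \<Rightarrow> 'a measure" where
  "gibbs_measure U = density lborel (\<lambda>x. ennreal (exp (- U x) / (\<integral>y. exp (- U y) \<partial>lborel)))"

lemma prob_space_gibbs_measure:
  assumes [measurable]: "U \<in> borel_measurable borel"
    and integrable: "integrable lborel (\<lambda>x. exp (- U x))"
  shows "prob_space (gibbs_measure U)"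
proof
  define Z where "Z = (\<integral>y. exp (- U y) \<partial>lborel)"
  have "0 \<le> Z" unfolding Z_def by simp
  moreover have "Z \<noteq> 0"
  proof
    assume "Z = 0"
    then have "AE x in lborel. exp (- U x) = 0"
      using integral_nonneg_eq_0_iff_AE[OF integrable] by (simp add: Z_def)
    then have "AE x in (lborel::'a measure). False" by simp
    then show False by (simp add: eventually_False ae_filter_eq_bot_iff)
  qed
  ultimately have "0 < Z" by simp
  have "(\<integral>\<^sup>+x. ennreal (exp (- U x) / Z) \<partial>lborel) = ennreal (\<integral>x. exp (- U x) / Z \<partial>lborel)"
    using integrable \<open>0 < Z\<close> by (intro nn_integral_eq_integral) auto
  also have "\<dots> = 1" using \<open>0 < Z\<close> by (simp add: Z_def)
  finally show "emeasure (gibbs_measure U) (space (gibbs_measure U)) = 1"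
    by (simp add: gibbs_measure_def emeasure_density Z_def)
qed

lemma integrable_exp_neg_quadratic_growth:
  fixes U :: "'a::euclidean_space \<Rightarrow> real"
  assumes [measurable]: "U \<in> borel_measurable borel"
    and "quadratic_growth U c \<kappa>" and "0 < \<kappa>"
  shows "integrable lborel (\<lambda>x. exp (- U x))"
proof (rule integrableI_nonneg)
  have "(\<integral>\<^sup>+x. ennreal (exp (- U x)) \<partial>lborel) = (\<integral>\<^sup>+z. ennreal (exp (- U (c + z))) \<partial>lborel)"
    using nn_integral_lborel_affine[of "\<lambda>x. ennreal (exp (- U x))" 1 c] by simp
  also have "\<dots> \<le> (\<integral>\<^sup>+(z::'a). ennreal (exp (- U c) * exp (- \<kappa> / 2 * (norm z)\<^sup>2)) \<partial>lborel)"
  proof (intro nn_integral_mono ennreal_leI)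
    fix z
    show "exp (- U (c + z)) \<le> exp (- U c) * exp (- \<kappa> / 2 * (norm z)\<^sup>2)"
      using quadratic_growth_exp_le[OF assms(2), of 0 1 z] by (simp add: mult.commute)
  qed
  also have "\<dots> = exp (- U c) * (\<integral>\<^sup>+(z::'a). ennreal (exp (- \<kappa> / 2 * (norm z)\<^sup>2)) \<partial>lborel)"
    by (simp add: ennreal_mult nn_integral_cmult)
  also have "\<dots> < \<infinity>"
    using integrable_exp_neg_sq_norm[where 'a = 'a, of "\<kappa> / 2"] \<open>0 < \<kappa>\<close>
    by (simp add: integrable_iff_bounded ennreal_mult_less_top)
  finally show "(\<integral>\<^sup>+x. ennreal (exp (- U x)) \<partial>lborel) < \<infinity>" .
qed auto

lemma gibbs_measure_tail_le:
  fixes U :: "'a::euclidean_space \<Rightarrow> real"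
  assumes [measurable]: "U \<in> borel_measurable borel"
    and growth: "quadratic_growth U c \<kappa>" and "0 < \<kappa>" and "0 \<le> R"
  shows "measure (gibbs_measure U) {x. R < norm (x - c)}
           \<le> 2 ^ DIM('a) * exp (- 3 * \<kappa> * R\<^sup>2 / 8)"
proof -
  define Z where "Z = (\<integral>y. exp (- U y) \<partial>lborel)"
  define f where "f x = ennreal (exp (- U x) / Z)" for x
  define q where "q = exp (- 3 * \<kappa> * R\<^sup>2 / 8)"
  have [measurable]: "f \<in> borel_measurable borel" unfolding f_def by measurable
  have tail_sets[measurable]: "{x. R < norm (x - c)} \<in> sets borel"
    by (intro borel_open open_Collect_less continuous_intros)
  have gibbs: "gibbs_measure U = density lborel f"
    by (simp add: gibbs_measure_def f_def[abs_def] Z_def)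
  interpret prob_space "gibbs_measure U"
    using prob_space_gibbs_measure integrable_exp_neg_quadratic_growth assms by blast
  have total: "(\<integral>\<^sup>+x. f x \<partial>lborel) = 1"
    using emeasure_space_1 by (simp add: gibbs emeasure_density)
  have doubling: "f (c + 2 *\<^sub>R z) \<le> ennreal q * f (c + z)" if "R < 2 * norm z" for z
  proof -
    have "R\<^sup>2 \<le> 4 * (norm z)\<^sup>2"
      using that \<open>0 \<le> R\<close> abs_le_square_iff[of R "2 * norm z"] by (simp add: power_mult_distrib)
    then have "exp (- \<kappa> / 2 * (2\<^sup>2 - 1\<^sup>2) * (norm z)\<^sup>2) \<le> q"
      using \<open>0 < \<kappa>\<close> by (simp add: q_def)
    then have "exp (- U (c + 2 *\<^sub>R z)) \<le> q * exp (- U (c + z))"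
      using quadratic_growth_exp_le[OF growth, of 1 2 z] by (simp add: order_trans)
    moreover have "0 \<le> Z" by (simp add: Z_def)
    ultimately have "exp (- U (c + 2 *\<^sub>R z)) / Z \<le> q * (exp (- U (c + z)) / Z)"
      by (simp add: divide_right_mono)
    then have "f (c + 2 *\<^sub>R z) \<le> ennreal (q * (exp (- U (c + z)) / Z))"
      unfolding f_def by (rule ennreal_leI)
    also have "\<dots> = ennreal q * f (c + z)"
      unfolding f_def using \<open>0 \<le> Z\<close> by (intro ennreal_mult) (auto simp: q_def)
    finally show ?thesis .
  qed
  have "emeasure (gibbs_measure U) {x. R < norm (x - c)}
      = (\<integral>\<^sup>+x. f x * indicator {x. R < norm (x - c)} x \<partial>lborel)"
    by (simp add: gibbs emeasure_density)
  also have "\<dots> \<le> 2 ^ DIM('a) * ennreal q"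
    using nn_integral_tail_le_doubling[of f R c "ennreal q"] doubling total by simp
  also have "\<dots> = ennreal (2 ^ DIM('a) * q)"
    by (simp add: q_def ennreal_mult' flip: ennreal_power)
  finally show ?thesis
    by (simp add: emeasure_eq_measure q_def ennreal_le_iff)
qed

lemma shift_gibbs_measure_in_K0:
  fixes U :: "'a::euclidean_space \<Rightarrow> real"
  assumes [measurable]: "U \<in> borel_measurable borel"
    and growth: "quadratic_growth U c \<kappa>" and "1 \<le> \<kappa>"
  shows "shift_measure (gibbs_measure U) c \<in> K0 1 (2 ^ DIM('a) * exp 1 + 1)"
proof -
  let ?\<nu> = "shift_measure (gibbs_measure U) c"
  have prob: "prob_space (gibbs_measure U)"
    using prob_space_gibbs_measure integrable_exp_neg_quadratic_growth assms by fastforce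
  have sets: "sets (gibbs_measure U) = sets borel" by (simp add: gibbs_measure_def)
  have shift: "(\<lambda>x. x - c) \<in> measurable (gibbs_measure U) borel"
    by (subst measurable_cong_sets[OF sets refl]) measurable
  have tail: "measure ?\<nu> {y. R < norm y} < (2 ^ DIM('a) * exp 1 + 1) * exp (- 1 * R)"
    if "0 < R" for R
  proof -
    have "measure ?\<nu> {y. R < norm y} = measure (gibbs_measure U) {x. R < norm (x - c)}"
      unfolding shift_measure_def
      by (subst measure_distr[OF shift]) (auto simp: sets_eq_imp_space_eq[OF sets] vimage_def
          intro: borel_open open_Collect_less continuous_intros)
    also have "\<dots> \<le> 2 ^ DIM('a) * exp (- 3 * \<kappa> * R\<^sup>2 / 8)"
      using gibbs_measure_tail_le[OF assms(1) growth] \<open>1 \<le> \<kappa>\<close> \<open>0 < R\<close> by simp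
    also have "\<dots> \<le> 2 ^ DIM('a) * (exp 1 * exp (- R))"
    proof -
      have "0 \<le> (3 * R - 4)\<^sup>2" by simp
      then have "- 3 * \<kappa> * R\<^sup>2 / 8 \<le> 1 + - R"
        using \<open>1 \<le> \<kappa>\<close> mult_right_mono[OF \<open>1 \<le> \<kappa>\<close>, of "R\<^sup>2"]
        by (simp add: power2_eq_square algebra_simps)
      then show ?thesis by (simp flip: exp_add)
    qed
    also have "\<dots> < (2 ^ DIM('a) * exp 1 + 1) * exp (- 1 * R)"
      by (simp add: algebra_simps)
    finally show ?thesis .
  qed
  show ?thesis
    using prob_space.prob_space_distr[OF prob shift] tail
    by (simp add: K0_def shift_measure_def)
qed

lemma PiM_eq_gibbs_measure:
  "PiM V W \<sigma> \<mu> = gibbs_measure (\<lambda>x. 2 / \<sigma>\<^sup>2 * (V x + conv W \<mu> x))"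
proof -
  have "gibbs_weight V W \<sigma> \<mu> = (\<lambda>x. exp (- (2 / \<sigma>\<^sup>2 * (V x + conv W \<mu> x))))"
    by (simp add: fun_eq_iff gibbs_weight_def add_divide_distrib diff_divide_distrib)
  then show ?thesis by (simp add: PiM_def gibbs_measure_def Zpart_def)
qed

lemma shift_PiM_in_K0:
  fixes V W :: "'a::euclidean_space \<Rightarrow> real"
  assumes V: "\<forall>x. V differentiable (at x)" and grad_V: "\<forall>x. grad V differentiable (at x)"
    and hess_V: "\<forall>x v. \<rho> * (norm v)\<^sup>2 \<le> hess V x v \<bullet> v"
    and W: "\<forall>x. W differentiable (at x)" and grad_W: "\<forall>x. grad W differentiable (at x)"
    and hess_W: "\<forall>x v. \<alpha> * (norm v)\<^sup>2 \<le> hess W x v \<bullet> v"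
    and \<mu>: "\<mu> \<in> PP P" and P_ge_1: "\<forall>x::'a. 1 \<le> poly P (norm x)"
    and W_le: "\<forall>x. \<bar>W x\<bar> \<le> poly P (norm x)"
    and grad_W_le: "\<forall>x. norm (grad W x) \<le> poly P (norm x)"
    and critical: "grad V c + grad_conv W \<mu> c = 0"
    and \<sigma>: "0 < \<sigma>" "\<sigma>\<^sup>2 \<le> 2 * (\<rho> + \<alpha>)"
  shows "shift_measure (PiM V W \<sigma> \<mu>) c \<in> K0 1 (2 ^ DIM('a) * exp 1 + 1)"
proof -
  let ?U = "\<lambda>x. 2 / \<sigma>\<^sup>2 * (V x + conv W \<mu> x)"
  have "continuous_on UNIV V" "continuous_on UNIV W"
    using V W
    by (auto intro!: differentiable_imp_continuous_on differentiable_at_imp_differentiable_on)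
  moreover have "prob_space \<mu>" "sets \<mu> = sets borel" using \<mu> by (auto simp: PP_def)
  ultimately have "?U \<in> borel_measurable borel"
    by (intro borel_measurable_times borel_measurable_add borel_measurable_continuous_onI
        borel_measurable_conv prob_space_imp_sigma_finite) auto
  moreover have "quadratic_growth ?U c (2 / \<sigma>\<^sup>2 * (\<rho> + \<alpha>))"
    by (rule quadratic_growth_mean_field_potential[OF V grad_V hess_V W grad_W hess_W \<mu> P_ge_1
          W_le grad_W_le critical]) simp
  moreover have "1 \<le> 2 / \<sigma>\<^sup>2 * (\<rho> + \<alpha>)"
    using \<sigma> by (simp add: field_simps)
  ultimately show ?thesis
    unfolding PiM_eq_gibbs_measure by (rule shift_gibbs_measure_in_K0)
qed

theorem proposition2p9:
  fixes V W :: "'a::euclidean_space \<Rightarrow> real"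
    and P :: "real poly" and \<rho> \<alpha> a :: real and m :: 'a
  assumes C2V: "C2 V" and C2W: "C2 W"
    and Vnn: "\<forall>x. V x \<ge> 0" and Wnn: "\<forall>x. W x \<ge> 0"
    and P1: "\<forall>x::'a. poly P (norm x) \<ge> 1"
    and Pbound: "\<forall>x. \<bar>W x\<bar> + norm (grad W x) + onorm (hess W x)
                    + \<bar>V x\<bar> + norm (grad V x) + onorm (hess V x) \<le> poly P (norm x)"
    and rho: "\<rho> > 0" and hessV: "\<forall>x v. hess V x v \<bullet> v \<ge> \<rho> * (norm v)\<^sup>2"
    and alpha: "\<alpha> > 0" and hessW: "\<forall>x v. hess W x v \<bullet> v \<ge> \<alpha> * (norm v)\<^sup>2"
    and lapV: "\<forall>x. laplacian V x \<le> a * V x"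
    and gradV_inf: "filterlim (\<lambda>x. (norm (grad V x))\<^sup>2 / V x) at_top at_infinity"
    and min: "\<forall>x. x \<noteq> m \<longrightarrow> V m < V x"
    and radial: "\<exists>G :: real \<Rightarrow> real. \<forall>x. W x = G (norm x)"
  shows "\<exists>\<sigma>0 > 0. \<exists>C_W > 0. \<exists>C_Pi > 0. \<forall>\<sigma>. 0 < \<sigma> \<and> \<sigma> \<le> \<sigma>0 \<longrightarrow>
           (\<forall>\<mu> \<in> PP P. \<forall>c. grad V c + grad_conv W \<mu> c = 0 \<longrightarrow>
              shift_measure (PiM V W \<sigma> \<mu>) c \<in> K0 C_W C_Pi)"
proof -
  have V: "\<forall>x. V differentiable (at x)" and grad_V: "\<forall>x. grad V differentiable (at x)"
    and W: "\<forall>x. W differentiable (at x)" and grad_W: "\<forall>x. grad W differentiable (at x)"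
    using C2V C2W by (auto simp: C2_def)
  have "\<bar>W x\<bar> \<le> poly P (norm x) \<and> norm (grad W x) \<le> poly P (norm x)" for x
  proof -
    have "0 \<le> onorm (hess V x)" "0 \<le> onorm (hess W x)"
      using onorm_pos_le bounded_linear_hess grad_V grad_W by blast+
    then show ?thesis
      using Pbound[rule_format, of x] abs_ge_zero[of "V x"] abs_ge_zero[of "W x"]
        norm_ge_zero[of "grad V x"] norm_ge_zero[of "grad W x"] by linarith
  qed
  then have W_le: "\<forall>x. \<bar>W x\<bar> \<le> poly P (norm x)"
    and grad_W_le: "\<forall>x. norm (grad W x) \<le> poly P (norm x)" by auto
  have "\<sigma>\<^sup>2 \<le> 2 * (\<rho> + \<alpha>)" if "0 < \<sigma>" "\<sigma> \<le> sqrt (2 * \<rho>)" for \<sigma>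
  proof -
    have "\<sigma>\<^sup>2 \<le> (sqrt (2 * \<rho>))\<^sup>2" using that by (intro power_mono) auto
    then show ?thesis using rho alpha by simp
  qed
  then show ?thesis
    using shift_PiM_in_K0[OF V grad_V hessV W grad_W hessW _ P1 W_le grad_W_le] rho
    by (intro exI[of _ "sqrt (2 * \<rho>)"] exI[of _ 1] exI[of _ "2 ^ DIM('a) * exp 1 + 1"] conjI)
       (auto intro: add_pos_nonneg)
qed

end
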